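(* Let $p$ be a prime and let $\alpha\in\mathbf{Bad}$ with $\alpha>0$. Then $\alpha$ satisfies the $p$-adic Littlewood Conjecture, i.e. $m_p(\alpha)=0$, if and only if there is a sequence of natural numbers $\{\ell_m\}_{m\in\mathbb{N}}$ such that, for every $m\in\mathbb{N}$, the number $p^{\ell_m}\alpha$ is not an infinite loop mod $p^m$.
   Context: For $\alpha\in\mathbb{R}$ write its simple continued fraction $[a_0;a_1,a_2,\ldots]$ with $a_0\in\mathbb{Z}$, $a_i\in\mathbb{N}$ for $i\ge1$. Convergents $p_k/q_k=[a_0;a_1,\ldots,a_k]$ are given by $p_{-1}=1,q_{-1}=0,p_0=a_0,q_0=1$, $p_k=a_kp_{k-1}+p_{k-2}$, $q_k=a_kq_{k-1}+q_{k-2}$. For $0\le m\le a_{k+1}$ the $\{k,m\}$-th semi-convergent is $p_{\{k,m\}}/q_{\{k,m\}}=(mp_k+p_{k-1})/(mq_k+q_{k-1})=[a_0;a_1,\ldots,a_k,m]$. For $n\in\mathbb{N}$, a real number $\alpha>0$ is an \emph{infinite loop mod $n$} if none of its semi-convergent denominators $q_{\{k,m\}}$ is divisible by $n$, except $q_{-1}=0$. (For rational $\alpha$ both finite expansions are considered and the expansion is regarded as ending with a partial quotient equal to $\infty$, so that after the last convergent all $m\ge0$ are allowed.) $\|x\|$ denotes the distance from $x$ to the nearest integer, $|\cdot|_p$ the $p$-adic absolute value, $m_p(\alpha)=\inf_{q\in\mathbb{N}} q\,|q|_p\,\|q\alpha\|$, and the $p$-adic Littlewood Conjecture for $\alpha$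 is the statement $m_p(\alpha)=0$. $\mathbf{Bad}=\{\alpha\in\mathbb{R}: \inf_{q\in\mathbb{N}} q\|q\alpha\|>0\}$, equivalently the irrationals with bounded partial quotients. *)

theory Defs
  imports "HOL-Analysis.Analysis" "HOL-Computational_Algebra.Computational_Algebra"
begin

text \<open>Index shift: cf_q a j = q_(j-1),
cf_p a j = p_(j-1); so cf_q a 0 = q_(-1) = 0, cf_q a 1 = q_0 = 1.\<close>

fun cf_q :: "(nat \<Rightarrow> int) \<Rightarrow> nat \<Rightarrow> int" where
  "cf_q a 0 = 0"
| "cf_q a (Suc 0) = 1"
| "cf_q a (Suc (Suc j)) = a (Suc j) * cf_q a (Suc j) + cf_q a j"

fun cf_p :: "(nat \<Rightarrow> int) \<Rightarrow> nat \<Rightarrow> int" where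
  "cf_p a 0 = 1"
| "cf_p a (Suc 0) = a 0"
| "cf_p a (Suc (Suc j)) = a (Suc j) * cf_p a (Suc j) + cf_p a j"

text \<open>(a, L) is a simple continued fraction expansion [a_0; a_1, ..., a_L] of x,
where L = \<infinity> for infinite expansions; entries a i with i > L are irrelevant.\<close>

definition cf_expansion :: "real \<Rightarrow> (nat \<Rightarrow> int) \<Rightarrow> enat \<Rightarrow> bool" where
  "cf_expansion x a L \<longleftrightarrow>
     (\<forall>i. 1 \<le> i \<longrightarrow> enat i \<le> L \<longrightarrow> a i \<ge> 1) \<and>
     (if L = \<infinity>
      then (\<lambda>k. real_of_int (cf_p a (Suc k)) / real_of_int (cf_q a (Suc k))) \<longlonglongrightarrow> x
      else x = real_of_int (cf_p a (Suc (the_enat L))) / real_of_int (cf_q a (Suc (the_enat L))))"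

text \<open>Infinite loop mod n: for every expansion of x, no semi-convergent denominator
q_{k,m} = m q_k + q_(k-1) (0 \<le> m \<le> a_(k+1), all m \<ge> 0 after the last
convergent) is divisible by n, except q_{0,0} = q_(-1) = 0.\<close>

definition infinite_loop :: "nat \<Rightarrow> real \<Rightarrow> bool" where
  "infinite_loop n x \<longleftrightarrow>
     (\<forall>a L. cf_expansion x a L \<longrightarrow>
       (\<forall>k m. enat k \<le> L \<longrightarrow> (enat k < L \<longrightarrow> m \<le> a (Suc k)) \<longrightarrow> 0 \<le> m \<longrightarrow>
          (k, m) \<noteq> (0, 0) \<longrightarrow>
          \<not> (int n dvd m * cf_q a (Suc k) + cf_q a k)))"

definition dist_nint :: "real \<Rightarrow> real" where
  "dist_nint x = \<bar>x - real_of_int (round x)\<bar>"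

definition padic_abs :: "nat \<Rightarrow> nat \<Rightarrow> real" where
  "padic_abs p q = (if q = 0 then 0 else 1 / real p ^ multiplicity p q)"

definition m_p :: "nat \<Rightarrow> real \<Rightarrow> real" where
  "m_p p \<alpha> = (INF q\<in>{1::nat..}. real q * padic_abs p q * dist_nint (real q * \<alpha>))"

definition Bad :: "real set" where
  "Bad = {\<alpha>. (INF q\<in>{1::nat..}. real q * dist_nint (real q * \<alpha>)) > 0}"

end

theory Submission
  imports Defs
begin

text \<open>
  If \<open>m\<^sub>p(\<alpha>) = 0\<close>, there are approximations \<open>u |n \<alpha> - r| < \<epsilon>\<close> with \<open>n = p\<^sup>k u\<close>, \<open>p \<nmid> u\<close> and
  \<open>gcd(n, r) = 1\<close>. As \<open>\<alpha>\<close> is badly approximable, \<open>k > M\<close> once \<open>\<epsilon>\<close> is small, and then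
  \<open>Q = p\<^sup>M u\<close> approximates \<open>\<beta> = p\<^sup>k\<^sup>-\<^sup>M \<alpha>\<close> so well that by Legendre's theorem it is a convergent
  denominator of \<open>\<beta>\<close>; being divisible by \<open>p\<^sup>M\<close>, it shows that \<open>\<beta>\<close> is no infinite loop mod \<open>p\<^sup>M\<close>.
  Conversely, if \<open>m\<^sub>p(\<alpha>) = c > 0\<close> and a semi-convergent denominator \<open>q = m q\<^sub>k\<^sub>+\<^sub>1 + q\<^sub>k\<close> of
  \<open>p\<^sup>l \<alpha>\<close> is divisible by \<open>p\<^sup>M\<close>, the approximations with denominators \<open>p\<^sup>l q\<^sub>k\<^sub>+\<^sub>1\<close> and \<open>p\<^sup>l q\<close>
  give \<open>c \<le> q\<^sub>k\<^sub>+\<^sub>1/q\<^sub>k\<^sub>+\<^sub>2\<close> and \<open>c \<le> q\<^sub>k\<^sub>+\<^sub>2/(p\<^sup>M q\<^sub>k\<^sub>+\<^sub>1)\<close>, whence \<open>p\<^sup>M c\<^sup>2 \<le> 1\<close>; so for large \<open>M\<close>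
  every \<open>p\<^sup>l \<alpha>\<close> is an infinite loop mod \<open>p\<^sup>M\<close>.
\<close>
lemma abs_add_same_sign:
  fixes x y :: real
  assumes "x * y \<ge> 0"
  shows "\<bar>x + y\<bar> = \<bar>x\<bar> + \<bar>y\<bar>"
  using assms by (cases "x \<ge> 0"; cases "y \<ge> 0") (auto simp: mult_le_0_iff zero_le_mult_iff)

lemma weighted_mean_between:
  fixes u v w1 w2 :: real
  assumes "w1 \<ge> 0" "w2 \<ge> 0" "w1 + w2 > 0"
  shows "min u v \<le> (w1 * u + w2 * v) / (w1 + w2) \<and> (w1 * u + w2 * v) / (w1 + w2) \<le> max u v"
proof -
  have "w1 * min u v + w2 * min u v \<le> w1 * u + w2 * v"
    using assms by (intro add_mono mult_left_mono) auto
  moreover have "w1 * u + w2 * v \<le> w1 * max u v + w2 * max u v"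
    using assms by (intro add_mono mult_left_mono) auto
  ultimately show ?thesis using assms by (simp add: field_simps)
qed

definition cf_conv :: "(nat \<Rightarrow> int) \<Rightarrow> nat \<Rightarrow> real" where
  "cf_conv a i = real_of_int (cf_p a i) / real_of_int (cf_q a i)"

definition cf_dev :: "(nat \<Rightarrow> int) \<Rightarrow> real \<Rightarrow> nat \<Rightarrow> real" where
  "cf_dev a x i = real_of_int (cf_q a i) * x - real_of_int (cf_p a i)"

lemma cf_expansion_infinite_iff:
  "cf_expansion x a \<infinity> \<longleftrightarrow> (\<forall>i\<ge>1. a i \<ge> 1) \<and> (\<lambda>k. cf_conv a (Suc k)) \<longlonglongrightarrow> x"
  by (simp add: cf_expansion_def cf_conv_def)

lemma cf_expansion_irrational_infinite:
  assumes "cf_expansion x a L" and "x \<notin> \<rat>"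
  shows "L = \<infinity>"
proof (rule ccontr)
  assume "L \<noteq> \<infinity>"
  then have "x = real_of_int (cf_p a (Suc (the_enat L))) / real_of_int (cf_q a (Suc (the_enat L)))"
    using assms(1) by (simp add: cf_expansion_def)
  then show False using assms(2) by simp
qed

lemma cf_det: "cf_p a (Suc i) * cf_q a i - cf_p a i * cf_q a (Suc i) = (-1) ^ Suc i"
proof (induction i)
  case (Suc i)
  have "cf_p a (Suc (Suc i)) * cf_q a (Suc i) - cf_p a (Suc i) * cf_q a (Suc (Suc i))
      = - (cf_p a (Suc i) * cf_q a i - cf_p a i * cf_q a (Suc i))"
    by (simp add: algebra_simps)
  with Suc show ?case by simp
qed simp

lemma cf_dev_Suc_Suc:
  "cf_dev a x (Suc (Suc i)) = real_of_int (a (Suc i)) * cf_dev a x (Suc i) + cf_dev a x i"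
  by (simp add: cf_dev_def algebra_simps)

lemma cf_dev_det:
  "cf_dev a x i * real_of_int (cf_q a (Suc i)) - cf_dev a x (Suc i) * real_of_int (cf_q a i)
     = (-1) ^ Suc i"
proof -
  have "cf_dev a x i * real_of_int (cf_q a (Suc i)) - cf_dev a x (Suc i) * real_of_int (cf_q a i)
      = real_of_int (cf_p a (Suc i) * cf_q a i - cf_p a i * cf_q a (Suc i))"
    by (simp add: cf_dev_def algebra_simps)
  then show ?thesis by (simp only: cf_det) simp
qed

context
  fixes a :: "nat \<Rightarrow> int"
  assumes pos: "\<And>i. 1 \<le> i \<Longrightarrow> a i \<ge> 1"
begin

lemma cf_q_bounds: "0 \<le> cf_q a i \<and> cf_q a i \<le> cf_q a (Suc i) \<and> 1 \<le> cf_q a (Suc i)"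
proof (induction i)
  case (Suc i)
  have "cf_q a (Suc i) \<le> a (Suc i) * cf_q a (Suc i)"
    using Suc pos[of "Suc i"] mult_right_mono[of 1 "a (Suc i)" "cf_q a (Suc i)"] by simp
  with Suc show ?case by (simp only: cf_q.simps) linarith
qed simp

lemma cf_q_nonneg: "0 \<le> cf_q a i"
  using cf_q_bounds by blast

lemma cf_q_le_Suc: "cf_q a i \<le> cf_q a (Suc i)"
  using cf_q_bounds by blast

lemma cf_q_pos: "1 \<le> i \<Longrightarrow> 1 \<le> cf_q a i"
  using cf_q_bounds[of "i - 1"] by simp

lemma cf_q_ge_half_index: "int n \<le> 2 * cf_q a n"
proof (induction n rule: nat_less_induct)
  case (1 n)
  show ?case
  proof (cases "n \<ge> 2")
    case True
    then obtain j where n: "n = Suc (Suc j)" by (metis add_2_eq_Suc le_Suc_ex)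
    have "cf_q a (Suc j) \<le> a (Suc j) * cf_q a (Suc j)"
      using cf_q_nonneg pos[of "Suc j"] mult_right_mono[of 1 "a (Suc j)" "cf_q a (Suc j)"] by simp
    then have "cf_q a (Suc j) + cf_q a j \<le> cf_q a n" by (simp add: n)
    moreover have "1 \<le> cf_q a (Suc j)" using cf_q_pos by simp
    moreover have "int j \<le> 2 * cf_q a j" using 1 n by simp
    ultimately show ?thesis using n by (simp del: cf_q.simps)
  next
    case False
    then consider "n = 0" | "n = 1" by linarith
    then show ?thesis by cases simp_all
  qed
qed

lemma cf_dev_abs_le_of_sign:
  assumes sign: "cf_dev a x i * cf_dev a x (Suc i) \<le> 0"
  shows "\<bar>cf_dev a x i\<bar> \<le> 1 / real_of_int (cf_q a (Suc i))"
proof -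
  define d0 where "d0 = cf_dev a x i"
  define d1 where "d1 = cf_dev a x (Suc i)"
  define q0 where "q0 = real_of_int (cf_q a i)"
  define q1 where "q1 = real_of_int (cf_q a (Suc i))"
  have q: "0 \<le> q0" "1 \<le> q1"
    using cf_q_nonneg cf_q_pos by (simp_all add: q0_def q1_def)
  have "(d0 * q1) * (- (d1 * q0)) = - (d0 * d1) * (q0 * q1)" by simp
  also have "\<dots> \<ge> 0" using sign q by (simp add: d0_def d1_def mult_nonpos_nonneg)
  finally have "\<bar>d0 * q1 + - (d1 * q0)\<bar> = \<bar>d0 * q1\<bar> + \<bar>d1 * q0\<bar>"
    by (subst abs_add_same_sign) auto
  moreover have "\<bar>d0 * q1 + - (d1 * q0)\<bar> = 1"
    using cf_dev_det[of a x i] by (simp add: d0_def d1_def q0_def q1_def)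
  ultimately have "\<bar>d0\<bar> * q1 + \<bar>d1\<bar> * q0 = 1" using q by (simp add: abs_mult)
  then have "\<bar>d0\<bar> * q1 \<le> 1" using mult_nonneg_nonneg[OF abs_ge_zero[of d1] q(1)] by linarith
  then show ?thesis using q by (simp add: d0_def q1_def field_simps)
qed

lemma cf_conv_Suc_Suc_between:
  assumes "j \<ge> 1"
  shows "min (cf_conv a j) (cf_conv a (Suc j)) \<le> cf_conv a (Suc (Suc j)) \<and>
    cf_conv a (Suc (Suc j)) \<le> max (cf_conv a j) (cf_conv a (Suc j))"
proof -
  define w0 where "w0 = real_of_int (cf_q a j)"
  define w1 where "w1 = real_of_int (a (Suc j) * cf_q a (Suc j))"
  have w: "w0 > 0" "w1 > 0"
    using cf_q_pos[of j] cf_q_pos[of "Suc j"] pos[of "Suc j"] assms by (auto simp: w0_def w1_def)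
  have "cf_conv a (Suc (Suc j)) = (w0 * cf_conv a j + w1 * cf_conv a (Suc j)) / (w0 + w1)"
    using w cf_q_pos[of "Suc j"] by (simp add: cf_conv_def w0_def w1_def field_simps)
  then show ?thesis using weighted_mean_between[of w0 w1] w by simp
qed

lemma cf_conv_limit_between:
  assumes lim: "(\<lambda>k. cf_conv a (Suc k)) \<longlonglongrightarrow> x" and "i \<ge> 1"
  shows "min (cf_conv a i) (cf_conv a (Suc i)) \<le> x \<and> x \<le> max (cf_conv a i) (cf_conv a (Suc i))"
proof -
  define lo hi where "lo n = min (cf_conv a n) (cf_conv a (Suc n))"
    and "hi n = max (cf_conv a n) (cf_conv a (Suc n))" for n
  have nested: "lo i \<le> lo (i + d) \<and> hi (i + d) \<le> hi i" for d
  proof (induction d)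
    case (Suc d)
    have "lo (i + d) \<le> lo (Suc (i + d)) \<and> hi (Suc (i + d)) \<le> hi (i + d)"
      using cf_conv_Suc_Suc_between[of "i + d"] \<open>i \<ge> 1\<close> by (auto simp: lo_def hi_def)
    with Suc show ?case by simp
  qed simp
  have between: "lo i \<le> cf_conv a n \<and> cf_conv a n \<le> hi i" if "n \<ge> i" for n
    using nested[of "n - i"] that by (auto simp: lo_def hi_def)
  have "cf_conv a \<longlonglongrightarrow> x" using lim by (rule LIMSEQ_imp_Suc)
  then have "lo i \<le> x \<and> x \<le> hi i"
    using between by (blast intro: LIMSEQ_le_const LIMSEQ_le_const2)
  then show ?thesis by (simp add: lo_def hi_def)
qed

end

lemma cf_dev_alternating:
  assumes exp: "cf_expansion x a \<infinity>" and "i \<ge> 1"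
  shows "cf_dev a x i * cf_dev a x (Suc i) \<le> 0"
proof -
  have pos: "\<And>i. 1 \<le> i \<Longrightarrow> a i \<ge> 1" and lim: "(\<lambda>k. cf_conv a (Suc k)) \<longlonglongrightarrow> x"
    using exp by (auto simp: cf_expansion_infinite_iff)
  define Q0 where "Q0 = real_of_int (cf_q a i)"
  define Q1 where "Q1 = real_of_int (cf_q a (Suc i))"
  have Q: "Q0 > 0" "Q1 > 0"
    using cf_q_pos[of a i, OF pos] cf_q_pos[of a "Suc i", OF pos] \<open>i \<ge> 1\<close>
    by (auto simp: Q0_def Q1_def)
  have "(x - cf_conv a i) * (x - cf_conv a (Suc i)) \<le> 0"
    using cf_conv_limit_between[OF pos lim \<open>i \<ge> 1\<close>] by (auto simp: mult_le_0_iff)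
  moreover have "cf_dev a x i * cf_dev a x (Suc i)
      = (Q0 * Q1) * ((x - cf_conv a i) * (x - cf_conv a (Suc i)))"
    using Q by (simp add: cf_dev_def cf_conv_def Q0_def Q1_def field_simps)
  ultimately show ?thesis using Q by (simp add: mult_nonneg_nonpos)
qed

lemma cf_dev_abs_le:
  assumes exp: "cf_expansion x a \<infinity>"
  shows "\<bar>cf_dev a x k\<bar> \<le> 1 / real_of_int (cf_q a (Suc k))"
proof (cases "k = 0")
  case True then show ?thesis by (simp add: cf_dev_def)
next
  case False
  have "\<And>i. 1 \<le> i \<Longrightarrow> a i \<ge> 1" using exp by (simp add: cf_expansion_infinite_iff)
  then show ?thesis using cf_dev_abs_le_of_sign cf_dev_alternating[OF exp] False by simp
qed

definition complete_quotient :: "real \<Rightarrow> nat \<Rightarrow> real" where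
  "complete_quotient x n = ((\<lambda>y. 1 / frac y) ^^ n) x"

definition partial_quotient :: "real \<Rightarrow> nat \<Rightarrow> int" where
  "partial_quotient x n = \<lfloor>complete_quotient x n\<rfloor>"

lemma complete_quotient_0 [simp]: "complete_quotient x 0 = x"
  by (simp add: complete_quotient_def)

lemma complete_quotient_Suc: "complete_quotient x (Suc n) = 1 / frac (complete_quotient x n)"
  by (simp add: complete_quotient_def)

context
  fixes x :: real
  assumes irr: "x \<notin> \<rat>"
begin

lemma complete_quotient_irrational: "complete_quotient x n \<notin> \<rat>"
proof (induction n)
  case (Suc n)
  have "frac (complete_quotient x n) \<notin> \<rat>"
  proof
    assume "frac (complete_quotient x n) \<in> \<rat>"
    then have "frac (complete_quotient x n) + of_int \<lfloor>complete_quotient x n\<rfloor> \<in> \<rat>"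
      by (intro Rats_add) auto
    with Suc show False by (simp add: frac_def)
  qed
  then show ?case by (auto simp: complete_quotient_Suc dest: Rats_divide[OF Rats_1])
qed (simp add: irr)

lemma frac_complete_quotient_pos: "0 < frac (complete_quotient x n)"
proof -
  have "complete_quotient x n \<notin> \<int>"
    using complete_quotient_irrational Ints_subset_Rats by blast
  then show ?thesis using frac_ge_0 frac_eq_0_iff by (metis order_le_less)
qed

lemma complete_quotient_Suc_gt_1: "complete_quotient x (Suc n) > 1"
  using frac_complete_quotient_pos[of n] frac_lt_1[of "complete_quotient x n"]
  by (simp add: complete_quotient_Suc)

lemma partial_quotient_pos: "1 \<le> i \<Longrightarrow> 1 \<le> partial_quotient x i"
  using complete_quotient_Suc_gt_1[of "i - 1"] by (simp add: partial_quotient_def)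

lemma complete_quotient_cf_dev:
  "complete_quotient x (Suc k) * cf_dev (partial_quotient x) x (Suc k)
     = - cf_dev (partial_quotient x) x k"
proof (induction k)
  case 0
  have "frac x > 0" using frac_complete_quotient_pos[of 0] by simp
  then show ?case by (simp add: complete_quotient_Suc cf_dev_def partial_quotient_def frac_def)
next
  case (Suc k)
  define y where "y = complete_quotient x (Suc k)"
  define A where "A = real_of_int (partial_quotient x (Suc k))"
  have "A = y - frac y"
    by (simp add: frac_def y_def A_def partial_quotient_def)
  have "cf_dev (partial_quotient x) x k = - y * cf_dev (partial_quotient x) x (Suc k)"
    using Suc by (simp add: y_def)
  then have "cf_dev (partial_quotient x) x (Suc (Suc k))
      = (A - y) * cf_dev (partial_quotient x) x (Suc k)"
    by (simp add: cf_dev_Suc_Suc A_def algebra_simps)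
  with \<open>A = y - frac y\<close> have "cf_dev (partial_quotient x) x (Suc (Suc k))
      = - frac y * cf_dev (partial_quotient x) x (Suc k)"
    by simp
  moreover have "frac y > 0" using frac_complete_quotient_pos[of "Suc k"] by (simp add: y_def)
  ultimately show ?case by (simp add: complete_quotient_Suc y_def)
qed

lemma partial_quotient_cf_dev_alternating:
  "cf_dev (partial_quotient x) x k * cf_dev (partial_quotient x) x (Suc k) \<le> 0"
proof -
  have "cf_dev (partial_quotient x) x k
      = - (complete_quotient x (Suc k) * cf_dev (partial_quotient x) x (Suc k))"
    using complete_quotient_cf_dev[of k] by simp
  then have "cf_dev (partial_quotient x) x k * cf_dev (partial_quotient x) x (Suc k)
      = - (complete_quotient x (Suc k) * (cf_dev (partial_quotient x) x (Suc k))\<^sup>2)"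
    by (simp add: power2_eq_square)
  then show ?thesis using complete_quotient_Suc_gt_1[of k] by simp
qed

lemma cf_expansion_partial_quotient: "cf_expansion x (partial_quotient x) \<infinity>"
proof -
  let ?a = "partial_quotient x"
  have pos: "\<And>i. 1 \<le> i \<Longrightarrow> 1 \<le> ?a i" by (rule partial_quotient_pos)
  have est: "\<bar>cf_conv ?a (Suc k) - x\<bar> \<le> 2 / real (Suc k)" for k
  proof -
    define Q where "Q = real_of_int (cf_q ?a (Suc k))"
    have Q: "1 \<le> Q" "real (Suc k) \<le> 2 * Q"
      using cf_q_pos[of ?a "Suc k", OF pos] cf_q_ge_half_index[of ?a "Suc k", OF pos] unfolding Q_def
      by linarith+
    have "\<bar>cf_dev ?a x (Suc k)\<bar> \<le> 1 / real_of_int (cf_q ?a (Suc (Suc k)))"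
      by (rule cf_dev_abs_le_of_sign[OF pos partial_quotient_cf_dev_alternating])
    also have "\<dots> \<le> 1" using cf_q_pos[of ?a "Suc (Suc k)", OF pos] by (simp del: cf_q.simps)
    finally have "\<bar>cf_conv ?a (Suc k) - x\<bar> \<le> 1 / Q"
      using Q by (simp add: cf_conv_def cf_dev_def Q_def field_simps abs_minus_commute)
    also have "\<dots> \<le> 2 / real (Suc k)" using Q by (simp add: field_simps)
    finally show ?thesis .
  qed
  have "(\<lambda>k. 2 / real (Suc k)) \<longlonglongrightarrow> 0"
    using tendsto_mult_right_zero[OF LIMSEQ_inverse_real_of_nat, of 2] by (simp add: divide_inverse)
  then have "(\<lambda>k. cf_conv ?a (Suc k) - x) \<longlonglongrightarrow> 0"
    by (rule Lim_null_comparison[rotated]) (use est in auto)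
  then have "(\<lambda>k. cf_conv ?a (Suc k)) \<longlonglongrightarrow> x"
    by (simp add: LIM_zero_iff)
  with pos show ?thesis by (simp add: cf_expansion_infinite_iff)
qed

end

lemma cf_q_bracket:
  assumes pos: "\<And>i. 1 \<le> i \<Longrightarrow> a i \<ge> 1" and "1 \<le> Q"
  obtains j where "1 \<le> j" "cf_q a j \<le> Q" "Q < cf_q a (Suc j)"
proof -
  have "Q < cf_q a (nat (2 * Q + 1))"
    using cf_q_ge_half_index[of a "nat (2 * Q + 1)", OF pos] \<open>1 \<le> Q\<close> by simp
  then have ex: "\<exists>n. Q < cf_q a n" ..
  define N where "N = (LEAST n. Q < cf_q a n)"
  have QN: "Q < cf_q a N" unfolding N_def by (rule LeastI_ex[OF ex])
  have below: "cf_q a n \<le> Q" if "n < N" for n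
    using not_less_Least[of n "\<lambda>n. Q < cf_q a n"] that by (simp add: N_def)
  have "2 \<le> N"
  proof (rule ccontr)
    assume "\<not> 2 \<le> N"
    then have "N = 0 \<or> N = 1" by auto
    with QN \<open>1 \<le> Q\<close> show False by auto
  qed
  then show ?thesis using that[of "N - 1"] below[of "N - 1"] QN by simp
qed

lemma cf_coordinates:
  obtains u v where "Q = u * cf_q a j + v * cf_q a (Suc j)" "r = u * cf_p a j + v * cf_p a (Suc j)"
    "\<bar>v\<bar> = \<bar>cf_q a j * r - cf_p a j * Q\<bar>"
proof -
  define d where "d = cf_p a (Suc j) * cf_q a j - cf_p a j * cf_q a (Suc j)"
  have "\<bar>d\<bar> = 1" by (simp add: d_def cf_det)
  then have dd: "d * d = 1" by (metis abs_mult_self_eq mult_1)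
  define u where "u = d * (cf_p a (Suc j) * Q - r * cf_q a (Suc j))"
  define v where "v = d * (cf_q a j * r - cf_p a j * Q)"
  have "u * cf_q a j + v * cf_q a (Suc j) = (d * d) * Q"
    by (simp add: u_def v_def d_def algebra_simps)
  then have "Q = u * cf_q a j + v * cf_q a (Suc j)" using dd by simp
  moreover have "u * cf_p a j + v * cf_p a (Suc j) = (d * d) * r"
    by (simp add: u_def v_def d_def algebra_simps)
  then have "r = u * cf_p a j + v * cf_p a (Suc j)" using dd by simp
  moreover have "\<bar>v\<bar> = \<bar>cf_q a j * r - cf_p a j * Q\<bar>"
    using \<open>\<bar>d\<bar> = 1\<close> by (simp add: v_def abs_mult)
  ultimately show ?thesis by (rule that)
qed

lemma opposite_signs_of_bracket:
  fixes u v q0 q1 Q :: int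
  assumes "0 < q0" "q0 \<le> Q" "Q < q1" "Q = u * q0 + v * q1" "v \<noteq> 0"
  shows "u * v < 0"
proof (cases "v > 0")
  case True
  then have "q1 \<le> v * q1" using assms by simp
  then have "u * q0 < 0" using assms by linarith
  then have "u < 0" using assms by (simp add: mult_less_0_iff)
  with True show ?thesis by (simp add: mult_neg_pos)
next
  case False
  with assms have "v < 0" by simp
  then have "v * q1 < 0" using assms by (simp add: mult_neg_pos)
  then have "0 < u * q0" using assms by linarith
  then have "0 < u" using assms by (simp add: zero_less_mult_iff)
  with \<open>v < 0\<close> show ?thesis by (simp add: mult_pos_neg)
qed

lemma cf_dev_abs_le_combination:
  assumes exp: "cf_expansion x a \<infinity>" and "1 \<le> j" and uv: "u * v < (0::int)"
  shows "\<bar>cf_dev a x j\<bar> \<le> \<bar>u * cf_dev a x j + v * cf_dev a x (Suc j)\<bar>"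
proof -
  have "(u * cf_dev a x j) * (v * cf_dev a x (Suc j))
      = real_of_int (u * v) * (cf_dev a x j * cf_dev a x (Suc j))" by simp
  also have "\<dots> \<ge> 0"
  proof (rule mult_nonpos_nonpos)
    show "real_of_int (u * v) \<le> 0" using uv by (simp only: of_int_le_0_iff less_imp_le)
  qed (rule cf_dev_alternating[OF exp \<open>1 \<le> j\<close>])
  finally have "\<bar>u * cf_dev a x j + v * cf_dev a x (Suc j)\<bar>
      = \<bar>u * cf_dev a x j\<bar> + \<bar>v * cf_dev a x (Suc j)\<bar>"
    by (rule abs_add_same_sign)
  moreover have "\<bar>cf_dev a x j\<bar> \<le> \<bar>u * cf_dev a x j\<bar>"
  proof -
    from uv have "1 \<le> \<bar>real_of_int u\<bar>" by (cases "u = 0") auto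
    then have "1 * \<bar>cf_dev a x j\<bar> \<le> \<bar>real_of_int u\<bar> * \<bar>cf_dev a x j\<bar>"
      by (intro mult_right_mono) auto
    then show ?thesis by (simp add: abs_mult)
  qed
  ultimately show ?thesis using abs_ge_zero[of "v * cf_dev a x (Suc j)"] by linarith
qed

lemma legendre_convergent_denominator:
  assumes exp: "cf_expansion x a \<infinity>" and Q: "1 \<le> Q" and cop: "coprime Q r"
    and close: "real_of_int Q * \<bar>real_of_int Q * x - real_of_int r\<bar> < 1/2"
  obtains j where "1 \<le> j" "cf_q a j = Q"
proof -
  have pos: "\<And>i. 1 \<le> i \<Longrightarrow> a i \<ge> 1" using exp by (simp add: cf_expansion_infinite_iff)
  obtain j where j: "1 \<le> j" "cf_q a j \<le> Q" "Q < cf_q a (Suc j)" by (rule cf_q_bracket[OF pos Q])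
  obtain u v where Quv: "Q = u * cf_q a j + v * cf_q a (Suc j)"
    and ruv: "r = u * cf_p a j + v * cf_p a (Suc j)"
    and v: "\<bar>v\<bar> = \<bar>cf_q a j * r - cf_p a j * Q\<bar>"
    by (rule cf_coordinates)
  have qj: "1 \<le> cf_q a j" using cf_q_pos[of a j, OF pos] j(1) by simp
  define e where "e = real_of_int Q * x - real_of_int r"
  have e_uv: "e = u * cf_dev a x j + v * cf_dev a x (Suc j)"
    unfolding e_def Quv ruv by (simp add: cf_dev_def algebra_simps)
  have "v = 0"
  proof (rule ccontr)
    assume "v \<noteq> 0"
    then have "u * v < 0" using opposite_signs_of_bracket[OF _ j(2,3) Quv] qj by simp
    then have Dj: "\<bar>cf_dev a x j\<bar> \<le> \<bar>e\<bar>"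
      unfolding e_uv by (rule cf_dev_abs_le_combination[OF exp j(1)])
    have "real_of_int (cf_q a j * r - cf_p a j * Q) = Q * cf_dev a x j - cf_q a j * e"
      by (simp add: cf_dev_def e_def algebra_simps)
    then have "\<bar>real_of_int v\<bar> = \<bar>Q * cf_dev a x j - cf_q a j * e\<bar>"
      using v by (metis of_int_abs)
    also have "\<dots> \<le> \<bar>Q * cf_dev a x j\<bar> + \<bar>cf_q a j * e\<bar>" by (rule abs_triangle_ineq4)
    also have "\<dots> = Q * \<bar>cf_dev a x j\<bar> + cf_q a j * \<bar>e\<bar>" using Q qj by (simp add: abs_mult)
    also have "\<dots> \<le> Q * \<bar>e\<bar> + Q * \<bar>e\<bar>"
      using Dj Q j(2) by (intro add_mono mult_mono) auto
    also have "\<dots> < 1" using close by (simp add: e_def)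
    finally have "\<bar>v\<bar> < 1" by (metis of_int_abs of_int_less_1_iff)
    with \<open>v \<noteq> 0\<close> show False by linarith
  qed
  then have "u dvd Q" "u dvd r" using Quv ruv by simp_all
  with cop have "is_unit u" by (rule coprime_common_divisor)
  moreover have "0 < u * cf_q a j" using \<open>v = 0\<close> Quv Q by simp
  then have "0 < u" using qj by (simp add: zero_less_mult_iff)
  ultimately have "u = 1" by (auto simp: zdvd1_eq)
  then show ?thesis using that j(1) Quv \<open>v = 0\<close> by simp
qed

lemma convex_abs_le:
  fixes m A X Y B :: real
  assumes "0 \<le> m" "m \<le> A" "A > 0" "\<bar>X\<bar> \<le> B" "\<bar>A * Y + X\<bar> \<le> B"
  shows "\<bar>m * Y + X\<bar> \<le> B"
proof -
  define t where "t = m / A"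
  have t: "0 \<le> t" "t \<le> 1" using assms by (auto simp: t_def field_simps)
  have "m * Y + X = t * (A * Y + X) + (1 - t) * X" using assms(3) by (simp add: t_def field_simps)
  also have "\<bar>\<dots>\<bar> \<le> t * \<bar>A * Y + X\<bar> + (1 - t) * \<bar>X\<bar>"
    using t by (metis abs_mult abs_of_nonneg abs_triangle_ineq diff_ge_0_iff_ge)
  also have "\<dots> \<le> t * B + (1 - t) * B"
    using t assms by (intro add_mono mult_left_mono) auto
  finally show ?thesis by (simp add: algebra_simps)
qed

lemma semiconvergent_dev_le:
  assumes exp: "cf_expansion x a \<infinity>" and m: "0 \<le> m" "m \<le> a (Suc k)"
  shows "\<bar>real_of_int (m * cf_q a (Suc k) + cf_q a k) * x - real_of_int (m * cf_p a (Suc k) + cf_p a k)\<bar>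
    \<le> 1 / real_of_int (cf_q a (Suc k))"
proof -
  have pos: "\<And>i. 1 \<le> i \<Longrightarrow> a i \<ge> 1" using exp by (simp add: cf_expansion_infinite_iff)
  have q: "1 \<le> cf_q a (Suc k)" "cf_q a (Suc k) \<le> cf_q a (Suc (Suc k))"
    "cf_q a (Suc (Suc k)) \<le> cf_q a (Suc (Suc (Suc k)))"
    using cf_q_pos[of a, OF pos] cf_q_le_Suc[of a, OF pos] by (simp_all del: cf_q.simps)
  have "\<bar>cf_dev a x (Suc (Suc k))\<bar> \<le> 1 / real_of_int (cf_q a (Suc (Suc (Suc k))))"
    by (rule cf_dev_abs_le[OF exp])
  also have "\<dots> \<le> 1 / real_of_int (cf_q a (Suc k))"
    using q by (intro divide_left_mono) (simp_all del: cf_q.simps)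
  finally have "\<bar>real_of_int (a (Suc k)) * cf_dev a x (Suc k) + cf_dev a x k\<bar>
      \<le> 1 / real_of_int (cf_q a (Suc k))"
    by (simp only: cf_dev_Suc_Suc)
  then have "\<bar>real_of_int m * cf_dev a x (Suc k) + cf_dev a x k\<bar> \<le> 1 / real_of_int (cf_q a (Suc k))"
    by (rule convex_abs_le[rotated 4])
      (use m pos[of "Suc k"] cf_dev_abs_le[OF exp, of k] in simp_all)
  then show ?thesis by (simp add: cf_dev_def algebra_simps)
qed

lemma not_infinite_loop_convergent_denominator:
  assumes exp: "cf_expansion x a \<infinity>" and "1 \<le> j" and "int n dvd cf_q a j"
  shows "\<not> infinite_loop n x"
proof
  assume "infinite_loop n x"
  then have "\<forall>k m. enat k \<le> \<infinity> \<longrightarrow> (enat k < \<infinity> \<longrightarrow> m \<le> a (Suc k)) \<longrightarrow> 0 \<le> m \<longrightarrow>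
      (k, m) \<noteq> (0, 0) \<longrightarrow> \<not> int n dvd m * cf_q a (Suc k) + cf_q a k"
    using exp unfolding infinite_loop_def by blast
  moreover have "1 \<le> a (Suc j)" using exp by (auto simp: cf_expansion_infinite_iff)
  ultimately have "\<not> int n dvd 0 * cf_q a (Suc j) + cf_q a j"
    using \<open>1 \<le> j\<close> by (intro \<open>\<forall>k m. _\<close>[rule_format]) simp_all
  with \<open>int n dvd cf_q a j\<close> show False by simp
qed

lemma dist_nint_nonneg: "0 \<le> dist_nint x"
  by (simp add: dist_nint_def)

lemma dist_nint_le: "dist_nint x \<le> \<bar>x - real_of_int r\<bar>"
  unfolding dist_nint_def by (rule round_diff_minimal)

lemma padic_abs_nonneg: "0 \<le> padic_abs p n"
  by (simp add: padic_abs_def)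

lemma padic_abs_le_of_dvd:
  assumes "prime p" "n > 0" "p ^ e dvd n"
  shows "padic_abs p n \<le> 1 / real p ^ e"
proof -
  have "e \<le> multiplicity p n"
    using assms by (intro multiplicity_geI) auto
  then have "real p ^ e \<le> real p ^ multiplicity p n"
    using prime_gt_1_nat[OF assms(1)] by (intro power_increasing) auto
  then show ?thesis
    using assms prime_gt_1_nat[OF assms(1)] by (simp add: padic_abs_def frac_le)
qed

lemma bdd_below_m_p_terms:
  "bdd_below ((\<lambda>q. real q * padic_abs p q * dist_nint (real q * \<alpha>)) ` A)"
  by (rule bdd_belowI[of _ 0]) (auto simp: padic_abs_nonneg dist_nint_nonneg)

lemma m_p_le: "1 \<le> n \<Longrightarrow> m_p p \<alpha> \<le> real n * padic_abs p n * dist_nint (real n * \<alpha>)"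
  unfolding m_p_def by (rule cINF_lower[OF bdd_below_m_p_terms]) simp

lemma m_p_nonneg: "0 \<le> m_p p \<alpha>"
  unfolding m_p_def by (rule cINF_greatest) (auto simp: padic_abs_nonneg dist_nint_nonneg)

lemma m_p_less_imp:
  assumes "m_p p \<alpha> < e"
  obtains n where "1 \<le> n" "real n * padic_abs p n * dist_nint (real n * \<alpha>) < e"
  using assms that unfolding m_p_def by (subst (asm) cINF_less_iff[OF _ bdd_below_m_p_terms]) auto

lemma m_p_le_approx:
  assumes "prime p" "n > 0" "p ^ e dvd n"
  shows "m_p p \<alpha> \<le> real n / real p ^ e * \<bar>real n * \<alpha> - real_of_int r\<bar>"
proof -
  have "m_p p \<alpha> \<le> real n * padic_abs p n * dist_nint (real n * \<alpha>)"
    using assms(2) by (intro m_p_le) simp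
  also have "\<dots> \<le> real n * (1 / real p ^ e) * \<bar>real n * \<alpha> - real_of_int r\<bar>"
    using padic_abs_le_of_dvd[OF assms] dist_nint_le padic_abs_nonneg dist_nint_nonneg
    by (intro mult_mono mult_left_mono) auto
  finally show ?thesis by simp
qed

lemma m_p_le_scaled:
  assumes p: "prime p" and q: "1 \<le> q" and dvd: "int (p ^ e) dvd q"
  shows "m_p p \<alpha> \<le> real_of_int q / real p ^ e * \<bar>real_of_int q * (real p ^ l * \<alpha>) - real_of_int r\<bar>"
proof -
  have p0: "real p > 0" using prime_gt_0_nat[OF p] by simp
  have "p ^ e dvd nat q" using dvd q by (metis nat_int of_nat_dvd_iff zero_le_imp_eq_int order_trans zero_le_one)
  then have "p ^ (l + e) dvd p ^ l * nat q" by (simp add: power_add)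
  moreover have "p ^ l * nat q > 0" using q p0 by simp
  ultimately have "m_p p \<alpha> \<le> real (p ^ l * nat q) / real p ^ (l + e)
      * \<bar>real (p ^ l * nat q) * \<alpha> - real_of_int r\<bar>"
    by (intro m_p_le_approx[OF p])
  also have "\<dots> = real_of_int q / real p ^ e * \<bar>real_of_int q * (real p ^ l * \<alpha>) - real_of_int r\<bar>"
    using q p0 by (simp add: power_add field_simps)
  finally show ?thesis .
qed

lemma Bad_lower_bound:
  assumes "\<alpha> \<in> Bad"
  obtains b where "b > 0" "\<And>n. 1 \<le> n \<Longrightarrow> b \<le> real n * dist_nint (real n * \<alpha>)"
proof
  show "(INF q\<in>{1::nat..}. real q * dist_nint (real q * \<alpha>)) > 0"
    using assms by (simp add: Bad_def)
  show "(INF q\<in>{1::nat..}. real q * dist_nint (real q * \<alpha>)) \<le> real n * dist_nint (real n * \<alpha>)"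
    if "1 \<le> n" for n
    using that by (intro cINF_lower bdd_belowI[of _ 0]) (auto simp: dist_nint_nonneg)
qed

lemma Bad_irrational:
  assumes "\<alpha> \<in> Bad"
  shows "\<alpha> \<notin> \<rat>"
proof
  assume "\<alpha> \<in> \<rat>"
  then obtain r :: int and s :: nat where s: "s > 0" "\<alpha> = real_of_int r / real s"
    by (metis Rats_cases' of_int_of_nat_eq zero_less_imp_eq_int)
  obtain b where "b > 0" "\<And>n. 1 \<le> n \<Longrightarrow> b \<le> real n * dist_nint (real n * \<alpha>)"
    using Bad_lower_bound[OF assms] by blast
  moreover have "dist_nint (real s * \<alpha>) = 0" using s by (simp add: dist_nint_def)
  ultimately show False using s by (metis less_le_not_le mult_zero_right One_nat_def Suc_leI)
qed

lemma irrational_mult: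
  assumes "\<alpha> \<notin> \<rat>" "c \<in> \<rat>" "c \<noteq> 0"
  shows "c * \<alpha> \<notin> \<rat>"
proof
  assume "c * \<alpha> \<in> \<rat>"
  then have "(c * \<alpha>) / c \<in> \<rat>" using assms(2) by (rule Rats_divide)
  with assms show False by simp
qed

lemma m_p_sq_le_of_semiconvergent:
  assumes p: "prime p" and exp: "cf_expansion (real p ^ l * \<alpha>) a \<infinity>"
    and m: "0 \<le> m" "m \<le> a (Suc k)" and q: "1 \<le> m * cf_q a (Suc k) + cf_q a k"
    and dvd: "int (p ^ M) dvd m * cf_q a (Suc k) + cf_q a k"
  shows "real p ^ M * (m_p p \<alpha>)\<^sup>2 \<le> 1"
proof -
  define \<beta> where "\<beta> = real p ^ l * \<alpha>"
  define c where "c = m_p p \<alpha>"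
  have pos: "\<And>i. 1 \<le> i \<Longrightarrow> a i \<ge> 1" using exp by (simp add: cf_expansion_infinite_iff)
  have pg: "real p > 1" using prime_gt_1_nat[OF p] by simp
  define q1 where "q1 = cf_q a (Suc k)"
  define q2 where "q2 = cf_q a (Suc (Suc k))"
  define q where "q = m * q1 + cf_q a k"
  define r where "r = m * cf_p a (Suc k) + cf_p a k"
  have q1: "1 \<le> q1" "q1 \<le> q2"
    using cf_q_pos[of a, OF pos] cf_q_le_Suc[of a, OF pos] by (simp_all add: q1_def q2_def del: cf_q.simps)
  have "1 \<le> q" "q \<le> q2"
    using q m q1 mult_right_mono[of m "a (Suc k)" q1] by (simp_all add: q_def q2_def q1_def)
  have "c \<le> real_of_int q1 / real p ^ 0 * \<bar>real_of_int q1 * \<beta> - real_of_int (cf_p a (Suc k))\<bar>"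
    unfolding c_def \<beta>_def using q1 by (intro m_p_le_scaled[OF p]) simp_all
  also have "\<dots> = real_of_int q1 * \<bar>cf_dev a \<beta> (Suc k)\<bar>" by (simp add: cf_dev_def q1_def)
  also have "\<dots> \<le> real_of_int q1 * (1 / real_of_int q2)"
    using cf_dev_abs_le[OF exp, of "Suc k"] q1 by (intro mult_left_mono) (simp_all add: q2_def \<beta>_def)
  finally have c1: "c \<le> real_of_int q1 / real_of_int q2" by simp
  have sc: "\<bar>real_of_int q * \<beta> - real_of_int r\<bar> \<le> 1 / real_of_int q1"
    using semiconvergent_dev_le[OF exp m] by (simp only: q_def r_def q1_def \<beta>_def)
  have "c \<le> real_of_int q / real p ^ M * \<bar>real_of_int q * \<beta> - real_of_int r\<bar>"
    unfolding c_def \<beta>_def using \<open>1 \<le> q\<close> dvd by (intro m_p_le_scaled[OF p]) (simp_all add: q_def q1_def)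
  also have "\<dots> \<le> real_of_int q2 / real p ^ M * (1 / real_of_int q1)"
    using sc \<open>q \<le> q2\<close> \<open>1 \<le> q\<close> pg by (intro mult_mono divide_right_mono) simp_all
  finally have c2: "c \<le> real_of_int q2 / (real p ^ M * real_of_int q1)" by simp
  have "c\<^sup>2 \<le> (real_of_int q1 / real_of_int q2) * (real_of_int q2 / (real p ^ M * real_of_int q1))"
    unfolding power2_eq_square using c1 c2 m_p_nonneg[of p \<alpha>] by (intro mult_mono) (simp_all add: c_def)
  also have "\<dots> = 1 / real p ^ M" using q1 pg by (simp add: field_simps)
  finally show ?thesis using pg by (simp add: c_def field_simps)
qed

lemma infinite_loop_if_m_p_pos:
  assumes p: "prime p" and irr: "\<alpha> \<notin> \<rat>" and M: "1 < real p ^ M * (m_p p \<alpha>)\<^sup>2"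
  shows "infinite_loop (p ^ M) (real p ^ l * \<alpha>)"
  unfolding infinite_loop_def
proof (intro allI impI notI)
  fix a L k and m :: int
  assume exp: "cf_expansion (real p ^ l * \<alpha>) a L" and "enat k \<le> L"
    and m_le: "enat k < L \<longrightarrow> m \<le> a (Suc k)" and m0: "0 \<le> m" and km: "(k, m) \<noteq> (0, 0)"
    and dvd: "int (p ^ M) dvd m * cf_q a (Suc k) + cf_q a k"
  have "real p ^ l * \<alpha> \<notin> \<rat>"
    using irr prime_gt_0_nat[OF p] by (intro irrational_mult) auto
  with exp have "L = \<infinity>" by (rule cf_expansion_irrational_infinite)
  with exp m_le have exp: "cf_expansion (real p ^ l * \<alpha>) a \<infinity>" and "m \<le> a (Suc k)" by simp_all
  have pos: "\<And>i. 1 \<le> i \<Longrightarrow> a i \<ge> 1" using exp by (simp add: cf_expansion_infinite_iff)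
  have "1 \<le> m * cf_q a (Suc k) + cf_q a k"
  proof (cases "k = 0")
    case True
    with km m0 show ?thesis by simp
  next
    case False
    then have "1 \<le> cf_q a k" using cf_q_pos[of a k, OF pos] by simp
    moreover have "0 \<le> m * cf_q a (Suc k)" using m0 cf_q_nonneg[of a, OF pos] by simp
    ultimately show ?thesis by simp
  qed
  with exp m0 \<open>m \<le> a (Suc k)\<close> dvd have "real p ^ M * (m_p p \<alpha>)\<^sup>2 \<le> 1"
    by (intro m_p_sq_le_of_semiconvergent[OF p])
  with M show False by simp
qed

lemma coprime_approx_of_approx:
  assumes p: "prime p" and "n \<noteq> 0" and nw: "n = p ^ v * w"
  obtains k u r where "\<not> p dvd u" "coprime (int (p ^ k * u)) r"
    "real u * \<bar>real (p ^ k * u) * \<alpha> - real_of_int r\<bar> \<le> real w * \<bar>real n * \<alpha> - real_of_int r0\<bar>"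
proof -
  have "\<not> is_unit p" using p by auto
  define g where "g = gcd (int n) r0"
  define n' where "n' = nat (int n div g)"
  define r where "r = r0 div g"
  have "0 < g" using \<open>n \<noteq> 0\<close> by (simp add: g_def)
  have n'_int: "int n' = int n div g"
    using \<open>0 < g\<close> by (simp add: n'_def pos_imp_zdiv_nonneg_iff)
  have n_g: "int n = g * int n'" by (simp add: n'_int g_def)
  have r_g: "r0 = g * r" by (simp add: r_def g_def)
  have cop: "coprime (int n') r"
    using div_gcd_coprime[of "int n" r0] \<open>n \<noteq> 0\<close> by (simp add: n'_int r_def g_def)
  have "n' \<noteq> 0"
  proof
    assume "n' = 0"
    with n_g \<open>n \<noteq> 0\<close> show False by simp
  qed
  then obtain k u where n'_ku: "n' = p ^ k * u" and "\<not> p dvd u"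
    using multiplicity_decompose'[of n' p] \<open>\<not> is_unit p\<close> by metis
  have "u dvd p ^ v * w"
    using n_g n'_ku nw by (metis dvd_triv_right dvd_mult_right of_nat_dvd_iff of_nat_mult)
  moreover have "coprime u (p ^ v)"
    using prime_imp_coprime[OF p \<open>\<not> p dvd u\<close>] by (simp add: coprime_commute)
  ultimately have "u dvd w" by (simp add: coprime_dvd_mult_right_iff)
  moreover have "w \<noteq> 0" using nw \<open>n \<noteq> 0\<close> by auto
  ultimately have "u \<le> w" by (simp add: dvd_imp_le)
  have "real n = real_of_int g * real n'" using n_g by (metis of_int_of_nat_eq of_int_mult)
  then have "real n * \<alpha> - real_of_int r0 = real_of_int g * (real n' * \<alpha> - real_of_int r)"
    using r_g by (simp add: algebra_simps)
  then have "real u * \<bar>real n' * \<alpha> - real_of_int r\<bar>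
      = real u * \<bar>real n * \<alpha> - real_of_int r0\<bar> / real_of_int g"
    using \<open>0 < g\<close> by (simp add: abs_mult)
  also have "\<dots> \<le> real u * \<bar>real n * \<alpha> - real_of_int r0\<bar> / 1"
    using \<open>0 < g\<close> by (intro frac_le) simp_all
  also have "\<dots> \<le> real w * \<bar>real n * \<alpha> - real_of_int r0\<bar>"
    using \<open>u \<le> w\<close> by (simp add: mult_right_mono)
  finally show ?thesis using that[of u k r] \<open>\<not> p dvd u\<close> cop n'_ku by simp
qed

lemma m_p_zero_coprime_approx:
  assumes p: "prime p" and mp: "m_p p \<alpha> = 0" and "0 < e"
  obtains k u r where "\<not> p dvd u" "coprime (int (p ^ k * u)) r"
    "real u * \<bar>real (p ^ k * u) * \<alpha> - real_of_int r\<bar> < e"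
proof -
  obtain n where "1 \<le> n" and small: "real n * padic_abs p n * dist_nint (real n * \<alpha>) < e"
    using m_p_less_imp[of p \<alpha> e] mp \<open>0 < e\<close> by auto
  have "\<not> is_unit p" using p by auto
  define v where "v = multiplicity p n"
  obtain w where nw: "n = p ^ v * w"
    using multiplicity_decompose'[of n p] \<open>1 \<le> n\<close> \<open>\<not> is_unit p\<close> unfolding v_def by auto
  have "real n * padic_abs p n = real n / real p ^ v"
    using \<open>1 \<le> n\<close> by (simp add: padic_abs_def v_def)
  also have "\<dots> = real w" using prime_gt_0_nat[OF p] by (subst nw) simp
  finally have "real n * padic_abs p n * dist_nint (real n * \<alpha>)
      = real w * \<bar>real n * \<alpha> - real_of_int (round (real n * \<alpha>))\<bar>"
    by (simp add: dist_nint_def)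
  with small have small_w: "real w * \<bar>real n * \<alpha> - real_of_int (round (real n * \<alpha>))\<bar> < e"
    by simp
  from \<open>1 \<le> n\<close> have "n \<noteq> 0" by simp
  then obtain k u r where "\<not> p dvd u" "coprime (int (p ^ k * u)) r"
    and "real u * \<bar>real (p ^ k * u) * \<alpha> - real_of_int r\<bar>
      \<le> real w * \<bar>real n * \<alpha> - real_of_int (round (real n * \<alpha>))\<bar>"
    by (rule coprime_approx_of_approx[OF p _ nw])
  with small_w show ?thesis using that by simp
qed

lemma Bad_approx_exponent_gt:
  fixes p :: nat
  assumes pg: "1 < p" and "0 < b" and b: "\<And>n. 1 \<le> n \<Longrightarrow> b \<le> real n * dist_nint (real n * \<alpha>)"
    and "u \<noteq> 0" and small: "real u * \<bar>real (p ^ k * u) * \<alpha> - real_of_int r\<bar> < b / real p ^ M"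
  shows "M < k"
proof -
  define n where "n = p ^ k * u"
  have "1 \<le> n" using \<open>u \<noteq> 0\<close> pg by (simp add: n_def Suc_le_eq)
  then have "b \<le> real n * dist_nint (real n * \<alpha>)" by (rule b)
  also have "\<dots> \<le> real n * \<bar>real n * \<alpha> - real_of_int r\<bar>"
    by (intro mult_left_mono dist_nint_le) simp
  also have "\<dots> = real p ^ k * (real u * \<bar>real n * \<alpha> - real_of_int r\<bar>)" by (simp add: n_def)
  also have "\<dots> < real p ^ k * (b / real p ^ M)"
    using small pg unfolding n_def by (intro mult_strict_left_mono) simp_all
  finally have "1 * b < real p ^ k / real p ^ M * b" by simp
  then have "1 < real p ^ k / real p ^ M" by (rule mult_right_less_imp_less) (use \<open>b > 0\<close> in simp)
  then have "real p ^ M < real p ^ k" using pg by (simp add: less_divide_eq)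
  moreover have "1 < real p" using pg by simp
  ultimately show ?thesis using power_less_imp_less_exp by blast
qed

lemma not_infinite_loop_if_m_p_zero:
  assumes p: "prime p" and bad: "\<alpha> \<in> Bad" and mp: "m_p p \<alpha> = 0"
  obtains l where "1 \<le> l" "\<not> infinite_loop (p ^ M) (real p ^ l * \<alpha>)"
proof -
  obtain b where "b > 0" and b: "\<And>n. 1 \<le> n \<Longrightarrow> b \<le> real n * dist_nint (real n * \<alpha>)"
    using Bad_lower_bound[OF bad] by blast
  have pg: "real p > 1" using prime_gt_1_nat[OF p] by simp
  define e where "e = min (b / real p ^ M) (1 / (2 * real p ^ M))"
  have "0 < e" using \<open>b > 0\<close> pg by (simp add: e_def)
  then obtain k u r where "\<not> p dvd u" and cop: "coprime (int (p ^ k * u)) r"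
    and small: "real u * \<bar>real (p ^ k * u) * \<alpha> - real_of_int r\<bar> < e"
    using m_p_zero_coprime_approx[OF p mp] by blast
  have small_b: "real u * \<bar>real (p ^ k * u) * \<alpha> - real_of_int r\<bar> < b / real p ^ M"
    and small_half: "real u * \<bar>real (p ^ k * u) * \<alpha> - real_of_int r\<bar> < 1 / (2 * real p ^ M)"
    using small by (simp_all add: e_def)
  define n where "n = p ^ k * u"
  have "u \<noteq> 0" using \<open>\<not> p dvd u\<close> by (metis dvd_0_right)
  with \<open>b > 0\<close> b small_b have "M < k"
    by (intro Bad_approx_exponent_gt[OF prime_gt_1_nat[OF p]])
  define l where "l = k - M"
  define \<beta> where "\<beta> = real p ^ l * \<alpha>"
  define Q where "Q = int (p ^ M * u)"
  have Q1: "1 \<le> Q" using \<open>u \<noteq> 0\<close> prime_gt_0_nat[OF p] by (simp add: Q_def int_one_le_iff_zero_less)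
  have "k = M + l" using \<open>M < k\<close> by (simp add: l_def)
  then have Q_\<beta>: "real_of_int Q * \<beta> = real n * \<alpha>" by (simp add: Q_def \<beta>_def n_def power_add)
  have "Q dvd int n" using \<open>k = M + l\<close> by (simp add: Q_def n_def power_add)
  then have "coprime Q r" by (rule coprime_divisors[OF _ dvd_refl cop[folded n_def]])
  have "real_of_int Q * \<bar>real_of_int Q * \<beta> - real_of_int r\<bar>
      = real p ^ M * (real u * \<bar>real n * \<alpha> - real_of_int r\<bar>)"
    by (simp add: Q_\<beta>) (simp add: Q_def)
  also have "\<dots> < real p ^ M * (1 / (2 * real p ^ M))"
    using small_half pg unfolding n_def by (intro mult_strict_left_mono) simp_all
  finally have close: "real_of_int Q * \<bar>real_of_int Q * \<beta> - real_of_int r\<bar> < 1/2"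
    using pg by simp
  have "\<beta> \<notin> \<rat>" unfolding \<beta>_def using Bad_irrational[OF bad] pg by (intro irrational_mult) auto
  then have exp: "cf_expansion \<beta> (partial_quotient \<beta>) \<infinity>" by (rule cf_expansion_partial_quotient)
  obtain j where j: "1 \<le> j" "cf_q (partial_quotient \<beta>) j = Q"
    by (rule legendre_convergent_denominator[OF exp Q1 \<open>coprime Q r\<close> close])
  have "int (p ^ M) dvd Q" by (simp add: Q_def)
  with j have "\<not> infinite_loop (p ^ M) \<beta>"
    by (intro not_infinite_loop_convergent_denominator[OF exp j(1)]) simp
  moreover have "1 \<le> l" using \<open>M < k\<close> by (simp add: l_def)
  ultimately show ?thesis using that by (simp add: \<beta>_def)
qed

theorem theorem3p1:
  fixes p :: nat and \<alpha> :: real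
  assumes "prime p" and "\<alpha> \<in> Bad" and "\<alpha> > 0"
  shows "m_p p \<alpha> = 0 \<longleftrightarrow>
    (\<exists>l :: nat \<Rightarrow> nat. \<forall>m\<ge>1. l m \<ge> 1 \<and>
        \<not> infinite_loop (p ^ m) (real p ^ l m * \<alpha>))"
proof
  assume "m_p p \<alpha> = 0"
  then have "\<forall>m. \<exists>l. 1 \<le> l \<and> \<not> infinite_loop (p ^ m) (real p ^ l * \<alpha>)"
    using not_infinite_loop_if_m_p_zero[OF assms(1,2)] by blast
  then have "\<exists>l. \<forall>m. 1 \<le> l m \<and> \<not> infinite_loop (p ^ m) (real p ^ l m * \<alpha>)"
    by (rule choice)
  then show "\<exists>l. \<forall>m\<ge>1. l m \<ge> 1 \<and> \<not> infinite_loop (p ^ m) (real p ^ l m * \<alpha>)"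
    by blast
next
  assume "\<exists>l. \<forall>m\<ge>1. l m \<ge> 1 \<and> \<not> infinite_loop (p ^ m) (real p ^ l m * \<alpha>)"
  then obtain l where l: "\<And>m. 1 \<le> m \<Longrightarrow> \<not> infinite_loop (p ^ m) (real p ^ l m * \<alpha>)"
    by blast
  show "m_p p \<alpha> = 0"
  proof (rule ccontr)
    assume "m_p p \<alpha> \<noteq> 0"
    then have "0 < (m_p p \<alpha>)\<^sup>2" by simp
    have pg: "real p > 1" using prime_gt_1_nat[OF assms(1)] by simp
    obtain M where "1 / (m_p p \<alpha>)\<^sup>2 < real p ^ M" using real_arch_pow[OF pg] by blast
    also have "\<dots> \<le> real p ^ Suc M" using pg by (intro power_increasing) auto
    finally have "1 < real p ^ Suc M * (m_p p \<alpha>)\<^sup>2"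
      using \<open>0 < (m_p p \<alpha>)\<^sup>2\<close> by (simp add: field_simps)
    then have "infinite_loop (p ^ Suc M) (real p ^ l (Suc M) * \<alpha>)"
      by (rule infinite_loop_if_m_p_pos[OF assms(1) Bad_irrational[OF assms(2)]])
    with l[of "Suc M"] show False by simp
  qed
qed

end
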